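(* Let $P\subset\mathbb{R}^d$ be a $d$-polytope and let $\Lambda\subset\mathbb{R}^d$ be a $d$-dimensional lattice. Then there exists a $d$-polytope $Q\subset P$ that is lattice reduced with respect to $\Lambda$, satisfies $\mathrm{wdt}_\Lambda(Q)=\mathrm{wdt}_\Lambda(P)$, and has at most as many vertices as $P$.
   Context: A lattice $\Lambda\subset\mathbb{R}^d$ is a discrete subgroup spanning $\mathbb{R}^d$; $\Lambda^\star=\{y: x\cdot y\in\mathbb{Z}\ \forall x\in\Lambda\}$. For a convex body $C$ (compact convex, non-empty interior), $\mathrm{wdt}_\Lambda(C)=\min_{y\in\Lambda^\star\setminus\{0\}}\max_{a,b\in C}y\cdot(a-b)$. $C$ is lattice reduced w.r.t. $\Lambda$ if no convex body $C'\subsetneq C$ has $\mathrm{wdt}_\Lambda(C')=\mathrm{wdt}_\Lambda(C)$. *)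

theory Defs
  imports "HOL-Analysis.Analysis"
begin

definition is_lattice :: "'a::euclidean_space set \<Rightarrow> bool" where
  "is_lattice L \<longleftrightarrow>
     0 \<in> L \<and> (\<forall>x\<in>L. \<forall>y\<in>L. x + y \<in> L) \<and> (\<forall>x\<in>L. - x \<in> L) \<and>
     (\<exists>e>0. \<forall>x\<in>L. x \<noteq> 0 \<longrightarrow> e \<le> norm x) \<and>
     span L = UNIV"

definition dual_lattice :: "'a::euclidean_space set \<Rightarrow> 'a set" where
  "dual_lattice L = {y. \<forall>x\<in>L. x \<bullet> y \<in> \<int>}"

definition dir_width :: "'a::euclidean_space \<Rightarrow> 'a set \<Rightarrow> real" where
  "dir_width y C = (SUP p\<in>C \<times> C. y \<bullet> (fst p - snd p))"

definition lattice_width :: "'a::euclidean_space set \<Rightarrow> 'a set \<Rightarrow> real" where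
  "lattice_width L C = Inf {dir_width y C | y. y \<in> dual_lattice L \<and> y \<noteq> 0}"

definition convex_body :: "'a::euclidean_space set \<Rightarrow> bool" where
  "convex_body C \<longleftrightarrow> compact C \<and> convex C \<and> interior C \<noteq> {}"

definition lattice_reduced :: "'a::euclidean_space set \<Rightarrow> 'a set \<Rightarrow> bool" where
  "lattice_reduced L C \<longleftrightarrow> convex_body C \<and>
     \<not> (\<exists>C'. convex_body C' \<and> C' \<subset> C \<and> lattice_width L C' = lattice_width L C)"

definition full_polytope :: "'a::euclidean_space set \<Rightarrow> bool" where
  "full_polytope P \<longleftrightarrow> polytope P \<and> interior P \<noteq> {}"

definition vertices :: "'a::euclidean_space set \<Rightarrow> 'a set" where
  "vertices P = {v. v extreme_point_of P}"

end

theory Submission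
  imports Defs
begin

(* Let n be the number of vertices of P and w its lattice width. Among the n-tuples of points of P
   whose convex hull still has lattice width at least w, choose one minimising a functional F built
   from support functions in a dense sequence of directions; F is continuous and strictly decreases
   whenever the hull loses a point, so it plays the role of the volume. The hull Q of a minimiser
   has width exactly w, and it is full-dimensional because a flat body has arbitrarily small width
   in lattice directions approximating its normal (Dirichlet's theorem). Q is lattice reduced: if a
   convex body C strictly inside Q had width w, pull a vertex v of Q outside C slightly towards
   another vertex. The lattice widths of Q form a discrete set, so widths above w stay at least w
   under a small shrinking, and in the directions where Q has width exactly w the body C realises
   this width away from v. The moved tuple remains admissible and has smaller F, a contradiction. *)

section \<open>Directional and lattice widths\<close>

lemma dir_width_upper:
  fixes C :: "'a::euclidean_space set"
  assumes "bounded C" "p \<in> C" "q \<in> C"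
  shows "y \<bullet> (p - q) \<le> dir_width y C"
proof -
  obtain M where M: "\<And>x. x \<in> C \<Longrightarrow> norm x \<le> M" using assms(1) bounded_iff by blast
  have "y \<bullet> (fst pq - snd pq) \<le> norm y * (2 * M)" if "pq \<in> C \<times> C" for pq
  proof -
    have "norm (fst pq) \<le> M" "norm (snd pq) \<le> M" using M that by auto
    then have "norm (fst pq - snd pq) \<le> 2 * M"
      using norm_triangle_ineq4[of "fst pq" "snd pq"] by linarith
    then show ?thesis
      by (metis Cauchy_Schwarz_ineq2 abs_le_iff mult_left_mono norm_ge_zero order_trans)
  qed
  then have "bdd_above ((\<lambda>pq. y \<bullet> (fst pq - snd pq)) ` (C \<times> C))"
    by (rule bdd_aboveI2)
  then show ?thesis
    unfolding dir_width_def using cSUP_upper[of "(p, q)" "C \<times> C"] assms by force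
qed

lemma dir_width_least:
  fixes C :: "'a::euclidean_space set"
  assumes "C \<noteq> {}" "\<And>p q. p \<in> C \<Longrightarrow> q \<in> C \<Longrightarrow> y \<bullet> (p - q) \<le> M"
  shows "dir_width y C \<le> M"
  unfolding dir_width_def using assms by (intro cSUP_least) auto

lemma dir_width_attained:
  fixes C :: "'a::euclidean_space set"
  assumes "compact C" "C \<noteq> {}"
  obtains p q where "p \<in> C" "q \<in> C" "dir_width y C = y \<bullet> (p - q)"
proof -
  have cont: "continuous_on C ((\<bullet>) y)" by (intro continuous_intros)
  obtain p where p: "p \<in> C" "\<And>x. x \<in> C \<Longrightarrow> y \<bullet> x \<le> y \<bullet> p"
    using continuous_attains_sup[OF assms cont] by blast
  obtain q where q: "q \<in> C" "\<And>x. x \<in> C \<Longrightarrow> y \<bullet> q \<le> y \<bullet> x"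
    using continuous_attains_inf[OF assms cont] by blast
  have "dir_width y C \<le> y \<bullet> (p - q)"
    using assms(2) p q by (intro dir_width_least) (auto simp: inner_diff_right intro: diff_mono)
  moreover have "y \<bullet> (p - q) \<le> dir_width y C"
    using assms p q by (intro dir_width_upper) (auto intro: compact_imp_bounded)
  ultimately show ?thesis using that p q by force
qed

lemma dir_width_mono:
  fixes C :: "'a::euclidean_space set"
  assumes "C \<subseteq> C'" "C \<noteq> {}" "bounded C'"
  shows "dir_width y C \<le> dir_width y C'"
  using assms by (intro dir_width_least) (auto intro: dir_width_upper)

lemma dir_width_nonneg:
  fixes C :: "'a::euclidean_space set"
  assumes "C \<noteq> {}" "bounded C"
  shows "0 \<le> dir_width y C"
  using assms dir_width_upper[of C _ _ y] by fastforce

lemma dir_width_ball: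
  fixes C :: "'a::euclidean_space set"
  assumes "ball z r \<subseteq> C" "bounded C" "r > 0"
  shows "r * norm y \<le> dir_width y C"
proof (cases "y = 0")
  case True
  have "C \<noteq> {}" using assms(1,3) centre_in_ball by blast
  then show ?thesis using dir_width_nonneg[of C y] assms True by auto
next
  case False
  define h where "h = (r / 2 / norm y) *\<^sub>R y"
  have "norm h = r / 2" using False assms(3) by (simp add: h_def)
  then have "z + h \<in> C" "z - h \<in> C" using assms(1,3) by (auto simp: dist_norm subset_iff)
  then have "y \<bullet> ((z + h) - (z - h)) \<le> dir_width y C" using dir_width_upper[OF assms(2)] by blast
  moreover have "y \<bullet> ((z + h) - (z - h)) = r * norm y"
    using False by (simp add: h_def inner_add_right power2_norm_eq_inner[symmetric] power2_eq_square)
  ultimately show ?thesis by simp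
qed

lemma halfspace_le_convex_hull:
  fixes X :: "'a::euclidean_space set"
  assumes "\<And>x. x \<in> X \<Longrightarrow> z \<bullet> x \<le> c" "p \<in> convex hull X"
  shows "z \<bullet> p \<le> c"
proof -
  have "convex hull X \<subseteq> {x. z \<bullet> x \<le> c}"
    by (rule hull_minimal) (use assms convex_halfspace_le in auto)
  then show ?thesis using assms by auto
qed

lemma dir_width_convex_hull:
  fixes X :: "'a::euclidean_space set"
  assumes "X \<noteq> {}" "bounded X"
  shows "dir_width y (convex hull X) = dir_width y X"
proof (rule antisym)
  have "y \<bullet> (p - q) \<le> dir_width y X" if "p \<in> convex hull X" "q \<in> convex hull X" for p q
  proof -
    have "y \<bullet> (x - x') \<le> dir_width y X" if "x \<in> X" "x' \<in> X" for x x'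
      using assms that by (intro dir_width_upper)
    then have "y \<bullet> (x - q) \<le> dir_width y X" if "x \<in> X" for x
      using halfspace_le_convex_hull[of X "-y" "dir_width y X - y \<bullet> x" q] that \<open>q \<in> convex hull X\<close>
      by (force simp: inner_diff_right)
    then show ?thesis
      using halfspace_le_convex_hull[of X y "dir_width y X + y \<bullet> q" p] \<open>p \<in> convex hull X\<close>
      by (force simp: inner_diff_right)
  qed
  then show "dir_width y (convex hull X) \<le> dir_width y X"
    using assms(1) by (intro dir_width_least) auto
  show "dir_width y X \<le> dir_width y (convex hull X)"
    using assms by (intro dir_width_mono hull_subset) (auto simp: bounded_convex_hull)
qed

lemma dir_width_perturb:
  fixes s l :: "nat \<Rightarrow> 'a::euclidean_space"
  assumes "finite I" "I \<noteq> {}"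
  shows "dir_width y (s ` I) \<le> dir_width y (l ` I) + 2 * norm y * (\<Sum>i\<in>I. norm (s i - l i))"
proof (rule dir_width_least)
  define \<Delta> where "\<Delta> = (\<Sum>i\<in>I. norm (s i - l i))"
  have move: "y \<bullet> (s i - l i) \<le> norm y * \<Delta>" "y \<bullet> (l i - s i) \<le> norm y * \<Delta>" if "i \<in> I" for i
  proof -
    have "norm (s i - l i) \<le> \<Delta>" unfolding \<Delta>_def by (rule member_le_sum) (use assms that in auto)
    then have "norm y * norm (s i - l i) \<le> norm y * \<Delta>" by (simp add: mult_left_mono)
    then show "y \<bullet> (s i - l i) \<le> norm y * \<Delta>" "y \<bullet> (l i - s i) \<le> norm y * \<Delta>"
      using norm_cauchy_schwarz[of y "s i - l i"] norm_cauchy_schwarz[of y "l i - s i"]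
      by (simp_all add: norm_minus_commute)
  qed
  fix p q assume "p \<in> s ` I" "q \<in> s ` I"
  then obtain i j where ij: "i \<in> I" "j \<in> I" "p = s i" "q = s j" by auto
  have "y \<bullet> (l i - l j) \<le> dir_width y (l ` I)"
    using assms ij by (intro dir_width_upper) auto
  then show "y \<bullet> (p - q) \<le> dir_width y (l ` I) + 2 * norm y * \<Delta>"
    using move(1)[OF ij(1)] move(2)[OF ij(2)] ij by (simp add: inner_diff_right)
qed (use assms in auto)

lemma lattice_width_le_dir_width:
  fixes C :: "'a::euclidean_space set"
  assumes "y \<in> dual_lattice L" "y \<noteq> 0" "C \<noteq> {}" "bounded C"
  shows "lattice_width L C \<le> dir_width y C"
  unfolding lattice_width_def
  by (rule cInf_lower) (use assms dir_width_nonneg in \<open>auto intro!: bdd_belowI[where m=0]\<close>)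

lemma lattice_width_greatest:
  fixes C :: "'a::euclidean_space set"
  assumes "\<exists>y\<in>dual_lattice L. y \<noteq> 0"
    and "\<And>y. y \<in> dual_lattice L \<Longrightarrow> y \<noteq> 0 \<Longrightarrow> w \<le> dir_width y C"
  shows "w \<le> lattice_width L C"
  unfolding lattice_width_def by (rule cInf_greatest) (use assms in auto)

lemma lattice_width_mono:
  fixes C :: "'a::euclidean_space set"
  assumes "\<exists>y\<in>dual_lattice L. y \<noteq> 0" "C \<subseteq> C'" "C \<noteq> {}" "bounded C'"
  shows "lattice_width L C \<le> lattice_width L C'"
  using assms bounded_subset
  by (intro lattice_width_greatest) (auto intro: order_trans[OF lattice_width_le_dir_width dir_width_mono])

section \<open>Lattices and their duals\<close>

lemma lattice_add: "is_lattice L \<Longrightarrow> x \<in> L \<Longrightarrow> y \<in> L \<Longrightarrow> x + y \<in> L"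
  unfolding is_lattice_def by blast

lemma lattice_uminus: "is_lattice L \<Longrightarrow> x \<in> L \<Longrightarrow> - x \<in> L"
  unfolding is_lattice_def by blast

lemma lattice_diff: "is_lattice L \<Longrightarrow> x \<in> L \<Longrightarrow> y \<in> L \<Longrightarrow> x - y \<in> L"
  using lattice_add lattice_uminus by (metis diff_conv_add_uminus)

lemma lattice_of_nat_scaleR:
  assumes "is_lattice L" "x \<in> L"
  shows "of_nat k *\<^sub>R x \<in> L"
proof (induction k)
  case 0
  then show ?case using assms(1) by (simp add: is_lattice_def)
qed (simp add: algebra_simps lattice_add[OF assms(1) assms(2)])

lemma lattice_of_int_scaleR:
  assumes "is_lattice L" "x \<in> L"
  shows "of_int k *\<^sub>R x \<in> L"
proof (cases "k \<ge> 0")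
  case True
  then show ?thesis using lattice_of_nat_scaleR[OF assms, of "nat k"] by simp
next
  case False
  then have "of_int k *\<^sub>R x = - (of_nat (nat (- k)) *\<^sub>R x)" by simp
  then show ?thesis using lattice_of_nat_scaleR[OF assms] lattice_uminus[OF assms(1)] by simp
qed

lemma lattice_sum:
  assumes "is_lattice L" "\<And>i. i \<in> I \<Longrightarrow> f i \<in> L"
  shows "sum f I \<in> L"
  using assms(2)
proof (induction I rule: infinite_finite_induct)
  case (insert i I)
  then show ?case by (simp add: lattice_add[OF assms(1)])
qed (use assms(1) in \<open>auto simp: is_lattice_def\<close>)

lemma lattice_separated:
  assumes "is_lattice L"
  obtains e where "e > 0" "\<And>x y. x \<in> L \<Longrightarrow> y \<in> L \<Longrightarrow> x \<noteq> y \<Longrightarrow> e \<le> dist x y"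
proof -
  obtain e where "e > 0" "\<And>x. x \<in> L \<Longrightarrow> x \<noteq> 0 \<Longrightarrow> e \<le> norm x"
    using assms by (auto simp: is_lattice_def)
  with lattice_diff[OF assms] show ?thesis by (intro that) (auto simp: dist_norm)
qed

lemma finite_if_separated_bounded:
  fixes G :: "'a::heine_borel set"
  assumes "e > 0" "\<And>x y. x \<in> G \<Longrightarrow> y \<in> G \<Longrightarrow> x \<noteq> y \<Longrightarrow> e \<le> dist x y"
    and "S \<subseteq> G" "bounded S"
  shows "finite S"
proof (rule ccontr)
  assume "infinite S"
  then obtain x where "x islimpt S" using bounded_infinite_imp_islimpt[OF order_refl assms(4)] by blast
  then have inf: "infinite (S \<inter> ball x (e/2))"
    unfolding islimpt_eq_infinite_ball using assms(1) half_gt_zero by blast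
  then obtain p where p: "p \<in> S \<inter> ball x (e/2)" by (metis finite.emptyI ex_in_conv)
  from inf have "infinite (S \<inter> ball x (e/2) - {p})" by simp
  then obtain q where "q \<in> S \<inter> ball x (e/2) - {p}" by (metis finite.emptyI ex_in_conv)
  with p have pq: "p \<in> S \<inter> ball x (e/2)" "q \<in> S \<inter> ball x (e/2)" "p \<noteq> q" by auto
  then have "dist p q < e"
    using dist_triangle_half_l[of p x e q] by (simp add: dist_commute)
  moreover have "e \<le> dist p q" using assms(2,3) pq by blast
  ultimately show False by simp
qed

lemma lattice_basis:
  assumes "is_lattice L"
  obtains B where "B \<subseteq> L" "independent B" "span B = UNIV" "finite B"
proof -
  obtain B where B: "B \<subseteq> L" "independent B" "L \<subseteq> span B" "card B = dim L"
    by (rule basis_exists)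
  have "span L = UNIV" using assms by (simp add: is_lattice_def)
  then have "span B = UNIV" using span_minimal[OF B(3) subspace_span] by auto
  then show ?thesis using that[OF B(1,2)] independent_imp_finite[OF B(2)] by blast
qed

lemma fact_mult_Ints_if_frac_in_finite:
  fixes \<theta> :: real
  assumes "finite F" "card F \<le> N" "\<And>k. k \<le> N \<Longrightarrow> frac (real k * \<theta>) \<in> F"
  shows "real (fact N) * \<theta> \<in> \<int>"
proof -
  have "(\<lambda>k. frac (real k * \<theta>)) ` {0..N} \<subseteq> F" using assms(3) by auto
  moreover have "card F < card {0..N}" using assms(2) by simp
  ultimately have "\<not> inj_on (\<lambda>k. frac (real k * \<theta>)) {0..N}"
    using card_inj_on_le[OF _ _ assms(1)] by (meson leD)
  then obtain k1 k2 where k: "k1 < k2" "k2 \<le> N" "frac (real k1 * \<theta>) = frac (real k2 * \<theta>)"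
    unfolding inj_on_def by (metis atLeastAtMost_iff linorder_neqE_nat)
  then have "real (k2 - k1) * \<theta> = of_int (\<lfloor>real k2 * \<theta>\<rfloor> - \<lfloor>real k1 * \<theta>\<rfloor>)"
    by (simp add: frac_def left_diff_distrib)
  then have ints: "real (k2 - k1) * \<theta> \<in> \<int>" by simp
  have "(k2 - k1) dvd fact N" using k by (intro dvd_fact) auto
  then obtain j where "fact N = (k2 - k1) * j" by blast
  then have "real (fact N) * \<theta> = real j * (real (k2 - k1) * \<theta>)" by simp
  then show ?thesis using ints by (metis Ints_mult Ints_of_nat)
qed

lemma lattice_reduction_mod_basis:
  fixes L :: "'a::euclidean_space set"
  assumes L: "is_lattice L" and B: "B \<subseteq> L" "independent B" "span B = UNIV" "finite B"
    and "x \<in> L"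
  obtains z where "z \<in> L" "norm z \<le> (\<Sum>b\<in>B. norm b)"
    "\<And>b. b \<in> B \<Longrightarrow> representation B z b = frac (representation B x b)"
proof -
  define c where "c b x = representation B x b" for b x
  have lin: "linear (c b)" for b
    unfolding c_def by (rule bounded_linear.linear[OF bounded_linear_representation[OF B(2,3)]])
  define z where "z = x - (\<Sum>b\<in>B. of_int \<lfloor>c b x\<rfloor> *\<^sub>R b)"
  have "z \<in> L"
    unfolding z_def using B(1) \<open>x \<in> L\<close>
    by (intro lattice_diff[OF L] lattice_sum[OF L] lattice_of_int_scaleR[OF L]) auto
  have c_z: "c b' z = frac (c b' x)" if "b' \<in> B" for b'
  proof -
    have "(\<Sum>b\<in>B. of_int \<lfloor>c b x\<rfloor> * c b' b) = (\<Sum>b\<in>B. if b = b' then of_int \<lfloor>c b' x\<rfloor> else 0)"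
      using real_vector.representation_basis[OF B(2)] that by (intro sum.cong) (auto simp: c_def)
    also have "\<dots> = of_int \<lfloor>c b' x\<rfloor>" using that B(4) by simp
    finally show ?thesis
      by (simp add: z_def linear_diff[OF lin] linear_sum[OF lin] linear_scale[OF lin] frac_def)
  qed
  have "norm z = norm (\<Sum>b\<in>B. frac (c b x) *\<^sub>R b)"
    using real_vector.sum_representation_eq[OF B(2) _ B(4) order_refl, of z] B(3) c_z
    by (simp add: c_def)
  also have "\<dots> \<le> (\<Sum>b\<in>B. norm (frac (c b x) *\<^sub>R b))" by (rule norm_sum)
  also have "\<dots> \<le> (\<Sum>b\<in>B. norm b)"
    by (intro sum_mono) (simp add: frac_lt_1 less_imp_le mult_left_le_one_le)
  finally show ?thesis using that \<open>z \<in> L\<close> c_z by (simp add: c_def)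
qed

text \<open>The quotient of \<open>L\<close> by the sublattice spanned by \<open>B\<close> is finite: the reductions of
  the multiples \<open>k x\<close> modulo that sublattice are lattice points of a fixed ball.\<close>

lemma lattice_coordinates_rational:
  fixes L :: "'a::euclidean_space set"
  assumes L: "is_lattice L" and B: "B \<subseteq> L" "independent B" "span B = UNIV" "finite B"
  obtains N :: nat where "N > 0" "\<And>x b. x \<in> L \<Longrightarrow> b \<in> B \<Longrightarrow> real N * representation B x b \<in> \<int>"
proof -
  define F where "F = L \<inter> cball 0 (\<Sum>b\<in>B. norm b)"
  obtain e where e: "e > 0" "\<And>x y. x \<in> L \<Longrightarrow> y \<in> L \<Longrightarrow> x \<noteq> y \<Longrightarrow> e \<le> dist x y"
    using lattice_separated[OF L] by blast
  have "finite F" unfolding F_def by (rule finite_if_separated_bounded[OF e]) auto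
  have "real (fact (card F)) * representation B x b \<in> \<int>" if xb: "x \<in> L" "b \<in> B" for x b
  proof (rule fact_mult_Ints_if_frac_in_finite)
    show "finite ((\<lambda>z. representation B z b) ` F)" using \<open>finite F\<close> by simp
    show "card ((\<lambda>z. representation B z b) ` F) \<le> card F" using \<open>finite F\<close> by (rule card_image_le)
    show "frac (real k * representation B x b) \<in> (\<lambda>z. representation B z b) ` F" for k
    proof -
      obtain z where z: "z \<in> L" "norm z \<le> (\<Sum>b\<in>B. norm b)"
          "representation B z b = frac (representation B (real k *\<^sub>R x) b)"
        using lattice_reduction_mod_basis[OF L B lattice_of_nat_scaleR[OF L xb(1)]] xb(2) by metis
      moreover have "representation B (real k *\<^sub>R x) b = real k * representation B x b"
        using real_vector.representation_scale[OF B(2)] B(3) by simp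
      ultimately show ?thesis by (force simp: F_def)
    qed
  qed
  then show ?thesis using that[of "fact (card F)"] by simp
qed

lemma dual_lattice_diff:
  "y \<in> dual_lattice L \<Longrightarrow> y' \<in> dual_lattice L \<Longrightarrow> y - y' \<in> dual_lattice L"
  unfolding dual_lattice_def by (auto simp: inner_diff_right intro: Ints_diff)

lemma dual_lattice_int_combination:
  assumes "B \<subseteq> dual_lattice L"
  shows "(\<Sum>b\<in>B. of_int (p b) *\<^sub>R b) \<in> dual_lattice L"
  using assms unfolding dual_lattice_def by (force simp: inner_sum_right intro: Ints_mult)

text \<open>If \<open>N\<close> clears the denominators of the coordinates of \<open>L\<close> in the basis \<open>B\<close>, then \<open>N\<close>
  times the dual basis of \<open>B\<close> lies in the dual lattice.\<close>

lemma dual_lattice_spanning: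
  fixes L :: "'a::euclidean_space set"
  assumes "is_lattice L"
  obtains D where "finite D" "D \<subseteq> dual_lattice L" "span D = UNIV"
proof -
  obtain B where B: "B \<subseteq> L" "independent B" "span B = UNIV" "finite B"
    by (rule lattice_basis[OF assms])
  obtain N :: nat where N: "N > 0" "\<And>x b. x \<in> L \<Longrightarrow> b \<in> B \<Longrightarrow> real N * representation B x b \<in> \<int>"
    by (rule lattice_coordinates_rational[OF assms B]) auto
  define c where "c b x = representation B x b" for b x
  have lin: "linear (c b)" for b
    unfolding c_def by (rule bounded_linear.linear[OF bounded_linear_representation[OF B(2,3)]])
  define z where "z b = real N *\<^sub>R adjoint (c b) (1::real)" for b
  have z: "x \<bullet> z b = real N * c b x" for x b
    using adjoint_works[OF lin, where y = "1::real"] by (simp add: z_def)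
  have "z b \<in> dual_lattice L" if "b \<in> B" for b
    unfolding dual_lattice_def using N(2)[OF _ that] by (simp add: z c_def)
  moreover have "v \<in> span (z ` B)" for v
  proof -
    define w where "w = (\<Sum>b\<in>B. ((v \<bullet> b) / real N) *\<^sub>R z b)"
    have w: "w \<bullet> x = v \<bullet> x" for x
    proof -
      have "w \<bullet> x = (\<Sum>b\<in>B. (v \<bullet> b) * c b x)"
        using N(1) by (simp add: w_def inner_sum_left z inner_commute[of "z _"])
      also have "\<dots> = v \<bullet> (\<Sum>b\<in>B. c b x *\<^sub>R b)" by (simp add: inner_sum_right mult.commute)
      also have "(\<Sum>b\<in>B. c b x *\<^sub>R b) = x"
        using real_vector.sum_representation_eq[OF B(2) _ B(4) order_refl] B(3) by (simp add: c_def)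
      finally show ?thesis .
    qed
    have "(w - v) \<bullet> (w - v) = 0" using w[of "w - v"] by (simp add: inner_diff_left)
    then have "v = w" by simp
    also have "w \<in> span (z ` B)"
      unfolding w_def by (intro span_sum span_scale span_base) simp
    finally show ?thesis .
  qed
  ultimately show ?thesis using B(4) by (intro that[of "z ` B"]) auto
qed

lemma dual_lattice_nontrivial:
  fixes L :: "'a::euclidean_space set"
  assumes "is_lattice L"
  shows "\<exists>y\<in>dual_lattice L. y \<noteq> 0"
proof -
  obtain D where D: "D \<subseteq> dual_lattice L" "span D = UNIV"
    using dual_lattice_spanning[OF assms] by metis
  obtain b :: 'a where "b \<in> Basis" using nonempty_Basis by blast
  then have "b \<noteq> 0" by (rule nonzero_Basis)
  have "\<not> D \<subseteq> {0}"
  proof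
    assume "D \<subseteq> {0}"
    then have "span D \<subseteq> span {0}" by (rule span_mono)
    then have "b \<in> span {0}" using D(2) by blast
    then show False using \<open>b \<noteq> 0\<close> by simp
  qed
  then show ?thesis using D(1) by blast
qed

lemma dual_lattice_separated:
  fixes L :: "'a::euclidean_space set"
  assumes "is_lattice L"
  obtains \<rho> where "\<rho> > 0" "\<And>y. y \<in> dual_lattice L \<Longrightarrow> y \<noteq> 0 \<Longrightarrow> \<rho> \<le> norm y"
proof -
  obtain B where B: "B \<subseteq> L" "span B = UNIV" "finite B"
    using lattice_basis[OF assms] by metis
  define M where "M = 1 + (\<Sum>b\<in>B. norm b)"
  have "M > 0" unfolding M_def by (simp add: add_pos_nonneg sum_nonneg)
  have "1 / M \<le> norm y" if y: "y \<in> dual_lattice L" "y \<noteq> 0" for y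
  proof -
    obtain b where b: "b \<in> B" "b \<bullet> y \<noteq> 0"
    proof (rule ccontr)
      assume "\<not> thesis"
      with that have "y = 0" by (intro vector_eq_dot_span[of y B 0]) (use B(2) in auto)
      with y(2) show False by contradiction
    qed
    have "1 \<le> \<bar>y \<bullet> b\<bar>"
      using y(1) b B(1) by (intro Ints_nonzero_abs_ge1) (auto simp: dual_lattice_def inner_commute)
    also have "\<dots> \<le> norm y * norm b" by (rule Cauchy_Schwarz_ineq2)
    also have "norm b \<le> M"
      unfolding M_def using member_le_sum[of b B norm] b(1) B(3) by simp
    then have "norm y * norm b \<le> norm y * M" by (simp add: mult_left_mono)
    finally show ?thesis using \<open>M > 0\<close> by (simp add: field_simps)
  qed
  then show ?thesis using that[of "1 / M"] \<open>M > 0\<close> by auto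
qed

lemma finite_dual_lattice_cball:
  assumes "is_lattice (L :: 'a::euclidean_space set)"
  shows "finite (dual_lattice L \<inter> cball 0 R)"
proof -
  obtain \<rho> where \<rho>: "\<rho> > 0" "\<And>y. y \<in> dual_lattice L \<Longrightarrow> y \<noteq> 0 \<Longrightarrow> \<rho> \<le> norm y"
    using dual_lattice_separated[OF assms] by blast
  show ?thesis
  proof (rule finite_if_separated_bounded[OF \<rho>(1), of "dual_lattice L"])
    show "\<rho> \<le> dist y y'" if "y \<in> dual_lattice L" "y' \<in> dual_lattice L" "y \<noteq> y'" for y y'
      using \<rho>(2)[OF dual_lattice_diff[OF that(1,2)]] that(3) by (simp add: dist_norm)
  qed auto
qed

section \<open>Flat bodies and the discreteness of widths\<close>

lemma Dirichlet_approx_finite_set: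
  fixes \<theta> :: "'a \<Rightarrow> real" and N :: nat
  assumes "finite B" "N > 0"
  obtains q :: int and p :: "'a \<Rightarrow> int"
    where "q > 0" "\<And>b. b \<in> B \<Longrightarrow> \<bar>of_int q * \<theta> b - of_int (p b)\<bar> < 1 / N"
proof -
  from finite_conv_nat_seg_image[THEN iffD1, OF assms(1)]
  obtain d :: nat and bb where bb: "B = bb ` {i. i < d}" by blast
  obtain q pp where qpp: "0 < q" "\<And>i. i < d \<Longrightarrow> \<bar>of_int q * \<theta> (bb i) - of_int (pp i)\<bar> < 1 / N"
    using Dirichlet_approx_simult[OF assms(2), where \<theta> = "\<theta> \<circ> bb" and n = d] by (metis comp_apply)
  have "\<bar>of_int q * \<theta> b - of_int (pp (inv_into {i. i < d} bb b))\<bar> < 1 / N" if "b \<in> B" for b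
  proof -
    have "b \<in> bb ` {i. i < d}" using that bb by simp
    then have "inv_into {i. i < d} bb b < d" "bb (inv_into {i. i < d} bb b) = b"
      using inv_into_into[of b bb "{i. i < d}"] f_inv_into_f[of b bb "{i. i < d}"] by auto
    then show ?thesis using qpp(2) by force
  qed
  then show ?thesis by (rule that[OF qpp(1)])
qed

lemma int_combination_near_ray:
  fixes a :: "'a::euclidean_space"
  assumes "finite B" "span B = UNIV" "a \<noteq> 0" "\<epsilon> > 0"
  obtains p :: "'a \<Rightarrow> int" and q :: int where "q > 0"
    "norm ((\<Sum>b\<in>B. of_int (p b) *\<^sub>R b) - of_int q *\<^sub>R a) < \<epsilon>"
    "(\<Sum>b\<in>B. of_int (p b) *\<^sub>R b) \<noteq> 0"
proof -
  define \<epsilon>' where "\<epsilon>' = min \<epsilon> (norm a)"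
  have \<epsilon>': "0 < \<epsilon>'" "\<epsilon>' \<le> \<epsilon>" "\<epsilon>' \<le> norm a" using assms by (auto simp: \<epsilon>'_def)
  have "a \<in> range (\<lambda>u. \<Sum>b\<in>B. u b *\<^sub>R b)" using span_finite[OF assms(1)] assms(2) by simp
  then obtain \<theta> where \<theta>: "a = (\<Sum>b\<in>B. \<theta> b *\<^sub>R b)" by blast
  define S where "S = (\<Sum>b\<in>B. norm b)"
  obtain M :: nat where M: "S / \<epsilon>' < real M" using reals_Archimedean2 by blast
  moreover have "0 \<le> S / \<epsilon>'" using \<epsilon>'(1) by (simp add: S_def sum_nonneg)
  ultimately have "0 < M" by linarith
  then obtain q p where qp: "0 < q" "\<And>b. b \<in> B \<Longrightarrow> \<bar>of_int q * \<theta> b - of_int (p b)\<bar> < 1 / M"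
    using Dirichlet_approx_finite_set[OF assms(1) \<open>0 < M\<close>] by metis
  define y where "y = (\<Sum>b\<in>B. of_int (p b) *\<^sub>R b)"
  have "y - of_int q *\<^sub>R a = (\<Sum>b\<in>B. (of_int (p b) - of_int q * \<theta> b) *\<^sub>R b)"
    by (simp add: y_def \<theta> scaleR_sum_right sum_subtractf scaleR_diff_left)
  then have "norm (y - of_int q *\<^sub>R a) \<le> (\<Sum>b\<in>B. norm ((of_int (p b) - of_int q * \<theta> b) *\<^sub>R b))"
    by (simp only: norm_sum)
  also have "\<dots> = (\<Sum>b\<in>B. \<bar>of_int q * \<theta> b - of_int (p b)\<bar> * norm b)" by (simp add: abs_minus_commute)
  also have "\<dots> \<le> (\<Sum>b\<in>B. (1 / M) * norm b)"
    using qp(2) by (intro sum_mono mult_right_mono) (auto simp: less_imp_le)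
  also have "\<dots> = S / M" by (simp add: S_def sum_divide_distrib)
  also have "\<dots> < \<epsilon>'" using M \<open>0 < M\<close> \<epsilon>'(1) by (simp add: divide_less_eq mult.commute)
  finally have near: "norm (y - of_int q *\<^sub>R a) < \<epsilon>'" .
  have "norm a \<le> norm (of_int q *\<^sub>R a)" using qp(1) by (simp add: mult_le_cancel_right1)
  then have "y \<noteq> 0" using near \<epsilon>'(3) by auto
  then show ?thesis using that[of q p] qp(1) near \<epsilon>'(2) by (simp add: y_def)
qed

text \<open>Dual vectors close to a multiple of the normal \<open>a\<close> are almost orthogonal to \<open>C - C\<close>.\<close>

lemma lattice_width_flat:
  fixes C :: "'a::euclidean_space set"
  assumes "is_lattice L" "bounded C" "C \<noteq> {}" "C \<subseteq> {x. a \<bullet> x = b0}" "a \<noteq> 0"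
  shows "lattice_width L C \<le> 0"
proof (rule field_le_epsilon)
  fix \<epsilon> :: real assume "\<epsilon> > 0"
  obtain M where M: "\<And>x. x \<in> C \<Longrightarrow> norm x \<le> M" using assms(2) bounded_iff by blast
  have "M \<ge> 0" using assms(3) M norm_ge_zero order_trans by blast
  obtain D where D: "finite D" "D \<subseteq> dual_lattice L" "span D = UNIV"
    by (rule dual_lattice_spanning[OF assms(1)])
  have "\<epsilon> / (2 * M + 1) > 0" using \<open>\<epsilon> > 0\<close> \<open>M \<ge> 0\<close> by simp
  then obtain p q where pq: "q > 0" "norm ((\<Sum>b\<in>D. of_int (p b) *\<^sub>R b) - of_int q *\<^sub>R a) < \<epsilon> / (2 * M + 1)"
    "(\<Sum>b\<in>D. of_int (p b) *\<^sub>R b) \<noteq> 0"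
    by (rule int_combination_near_ray[OF D(1,3) assms(5)])
  define y where "y = (\<Sum>b\<in>D. of_int (p b) *\<^sub>R b)"
  have "y \<in> dual_lattice L" unfolding y_def by (rule dual_lattice_int_combination[OF D(2)])
  have "dir_width y C \<le> \<epsilon>"
  proof (rule dir_width_least[OF assms(3)])
    fix u v assume uv: "u \<in> C" "v \<in> C"
    have "norm (u - v) \<le> 2 * M" using M[OF uv(1)] M[OF uv(2)] norm_triangle_ineq4[of u v] by linarith
    have "a \<bullet> (u - v) = 0" using assms(4) uv by (auto simp: inner_diff_right)
    then have "y \<bullet> (u - v) = (y - of_int q *\<^sub>R a) \<bullet> (u - v)" by (simp add: inner_diff_left)
    also have "\<dots> \<le> norm (y - of_int q *\<^sub>R a) * norm (u - v)" by (rule norm_cauchy_schwarz)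
    also have "\<dots> \<le> \<epsilon> / (2 * M + 1) * (2 * M)"
      using pq(2) \<open>norm (u - v) \<le> 2 * M\<close> \<open>\<epsilon> / (2 * M + 1) > 0\<close>
      by (intro mult_mono) (auto simp: y_def)
    also have "\<dots> \<le> \<epsilon>" using \<open>\<epsilon> > 0\<close> \<open>M \<ge> 0\<close> by (simp add: field_simps)
    finally show "y \<bullet> (u - v) \<le> \<epsilon>" .
  qed
  then show "lattice_width L C \<le> 0 + \<epsilon>"
    using lattice_width_le_dir_width[OF \<open>y \<in> dual_lattice L\<close> _ assms(3,2)] pq(3) by (simp add: y_def)
qed

lemma interior_nonempty_if_lattice_width_pos:
  fixes C :: "'a::euclidean_space set"
  assumes "is_lattice L" "convex C" "bounded C" "C \<noteq> {}" "0 < lattice_width L C"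
  shows "interior C \<noteq> {}"
proof
  assume "interior C = {}"
  then obtain a b0 where "a \<noteq> 0" "C \<subseteq> {x. a \<bullet> x = b0}"
    using empty_interior_subset_hyperplane[OF assms(2)] by metis
  then have "lattice_width L C \<le> 0" by (rule lattice_width_flat[OF assms(1,3,4), rotated])
  then show False using assms(5) by simp
qed

lemma lattice_width_pos:
  fixes C :: "'a::euclidean_space set"
  assumes "is_lattice L" "bounded C" "interior C \<noteq> {}"
  shows "0 < lattice_width L C"
proof -
  obtain \<rho> where \<rho>: "\<rho> > 0" "\<And>y. y \<in> dual_lattice L \<Longrightarrow> y \<noteq> 0 \<Longrightarrow> \<rho> \<le> norm y"
    using dual_lattice_separated[OF assms(1)] by blast
  obtain z r where zr: "r > 0" "ball z r \<subseteq> C" using assms(3) by (metis ex_in_conv mem_interior)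
  have "r * \<rho> \<le> lattice_width L C"
  proof (rule lattice_width_greatest[OF dual_lattice_nontrivial[OF assms(1)]])
    fix y assume "y \<in> dual_lattice L" "y \<noteq> 0"
    then have "r * \<rho> \<le> r * norm y" using \<rho>(2) zr(1) by simp
    also have "\<dots> \<le> dir_width y C" by (rule dir_width_ball[OF zr(2) assms(2) zr(1)])
    finally show "r * \<rho> \<le> dir_width y C" .
  qed
  moreover have "r * \<rho> > 0" using zr(1) \<rho>(1) by simp
  ultimately show ?thesis by linarith
qed

text \<open>The width in direction \<open>y\<close> is at least \<open>r * norm y\<close>, so only finitely many dual
  vectors give a width below \<open>w + 1\<close>.\<close>

lemma dir_width_gap:
  fixes Q :: "'a::euclidean_space set"
  assumes "is_lattice L" "bounded Q" "interior Q \<noteq> {}"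
  obtains \<delta> where "\<delta> > 0"
    "\<And>y. y \<in> dual_lattice L \<Longrightarrow> y \<noteq> 0 \<Longrightarrow> dir_width y Q \<le> w + \<delta> \<Longrightarrow> dir_width y Q \<le> w"
proof -
  obtain z r where zr: "r > 0" "ball z r \<subseteq> Q" using assms(3) by (metis ex_in_conv mem_interior)
  define G where "G = (\<lambda>y. dir_width y Q - w) ` {y \<in> dual_lattice L \<inter> cball 0 ((w + 1) / r). w < dir_width y Q}"
  have "finite G"
    unfolding G_def by (rule finite_imageI, rule finite_subset[OF _ finite_dual_lattice_cball[OF assms(1)]]) auto
  define \<delta> where "\<delta> = Min (insert 1 G) / 2"
  have "Min (insert 1 G) > 0" using \<open>finite G\<close> by (auto simp: G_def)
  moreover have "Min (insert 1 G) \<le> 1" using \<open>finite G\<close> by (intro Min_le) auto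
  ultimately have "\<delta> > 0" "\<delta> \<le> 1" unfolding \<delta>_def by linarith+
  have "dir_width y Q \<le> w" if y: "y \<in> dual_lattice L" "y \<noteq> 0" "dir_width y Q \<le> w + \<delta>" for y
  proof (rule ccontr)
    assume "\<not> dir_width y Q \<le> w"
    have "r * norm y \<le> w + 1" using dir_width_ball[OF zr(2) assms(2) zr(1), of y] y(3) \<open>\<delta> \<le> 1\<close> by linarith
    then have "norm y \<le> (w + 1) / r" using zr(1) by (simp add: field_simps)
    then have "dir_width y Q - w \<in> G" using y(1) \<open>\<not> dir_width y Q \<le> w\<close> by (auto simp: G_def)
    then have "Min (insert 1 G) \<le> dir_width y Q - w" using \<open>finite G\<close> by simp
    then show False using y(3) \<open>\<delta> > 0\<close> by (simp add: \<delta>_def)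
  qed
  then show ?thesis using that \<open>\<delta> > 0\<close> by blast
qed

section \<open>Support functions of hulls of tuples\<close>

definition hull_support :: "'a::euclidean_space \<Rightarrow> (nat \<Rightarrow> 'a) \<Rightarrow> nat \<Rightarrow> real" where
  "hull_support u s n = Max ((\<lambda>i. u \<bullet> s i) ` {..<n})"

lemma hull_support_ge: "i < n \<Longrightarrow> u \<bullet> s i \<le> hull_support u s n"
  unfolding hull_support_def by (rule Max_ge) auto

lemma hull_support_attained:
  assumes "n > 0"
  obtains i where "i < n" "hull_support u s n = u \<bullet> s i"
proof -
  have "hull_support u s n \<in> (\<lambda>i. u \<bullet> s i) ` {..<n}"
    unfolding hull_support_def using assms by (intro Max_in) auto
  then show ?thesis using that by auto
qed

lemma hull_support_convex_hull:
  "x \<in> convex hull (s ` {..<n}) \<Longrightarrow> u \<bullet> x \<le> hull_support u s n"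
  by (rule halfspace_le_convex_hull) (auto intro: hull_support_ge)

lemma hull_support_mono:
  assumes "n > 0" "\<And>i. i < n \<Longrightarrow> s' i \<in> convex hull (s ` {..<n})"
  shows "hull_support u s' n \<le> hull_support u s n"
  using hull_support_attained[OF assms(1), of u s'] hull_support_convex_hull assms(2) by metis

lemma hull_support_perturb:
  assumes "n > 0"
  shows "hull_support u l n \<le> hull_support u s n + norm u * (\<Sum>i<n. norm (s i - l i))"
proof -
  obtain i where i: "i < n" "hull_support u l n = u \<bullet> l i" by (rule hull_support_attained[OF assms])
  have "norm (s i - l i) \<le> (\<Sum>i<n. norm (s i - l i))" by (rule member_le_sum) (use i in auto)
  then have "u \<bullet> (l i - s i) \<le> norm u * (\<Sum>i<n. norm (s i - l i))"
    using norm_cauchy_schwarz[of u "l i - s i"] by (simp add: norm_minus_commute mult_left_mono order_trans)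
  moreover have "u \<bullet> s i \<le> hull_support u s n" using i(1) by (rule hull_support_ge)
  ultimately show ?thesis using i(2) by (simp add: inner_diff_right)
qed

lemma hull_support_perturb_direction:
  assumes "n > 0" "\<And>i. i < n \<Longrightarrow> norm (s i) \<le> R"
  shows "hull_support u s n \<le> hull_support u' s n + norm (u - u') * R"
proof -
  obtain i where i: "i < n" "hull_support u s n = u \<bullet> s i" by (rule hull_support_attained[OF assms(1)])
  have "(u - u') \<bullet> s i \<le> norm (u - u') * R"
    using norm_cauchy_schwarz[of "u - u'" "s i"] assms(2)[OF i(1)] by (simp add: mult_left_mono order_trans)
  moreover have "u' \<bullet> s i \<le> hull_support u' s n" using i(1) by (rule hull_support_ge)
  ultimately show ?thesis using i(2) by (simp add: inner_diff_left)
qed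

lemma abs_hull_support_le:
  assumes "n > 0" "\<And>i. i < n \<Longrightarrow> norm (s i) \<le> R"
  shows "\<bar>hull_support u s n\<bar> \<le> norm u * R"
proof -
  obtain i where i: "i < n" "hull_support u s n = u \<bullet> s i" by (rule hull_support_attained[OF assms(1)])
  have "\<bar>u \<bullet> s i\<bar> \<le> norm u * norm (s i)" by (rule Cauchy_Schwarz_ineq2)
  also have "\<dots> \<le> norm u * R" using assms(2)[OF i(1)] by (simp add: mult_left_mono)
  finally show ?thesis using i(2) by simp
qed

lemma summable_geometric_bound:
  fixes a :: "nat \<Rightarrow> real"
  assumes "\<And>k. \<bar>a k\<bar> \<le> (1/2)^k * R"
  shows "summable a"
  by (rule summable_comparison_test[of _ "\<lambda>k. (1/2)^k * R"])
    (use assms summable_mult2[OF summable_geometric, of "1/2" R] in auto)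

lemma suminf_le_geometric_bound:
  fixes a b :: "nat \<Rightarrow> real"
  assumes "\<And>k. \<bar>a k\<bar> \<le> (1/2)^k * R" "\<And>k. \<bar>b k\<bar> \<le> (1/2)^k * R"
    and "\<And>k. a k - b k \<le> (1/2)^k * \<Delta>"
  shows "suminf a \<le> suminf b + 2 * \<Delta>"
proof -
  have sa: "summable a" and sb: "summable b" using assms(1,2) by (auto intro: summable_geometric_bound)
  have "suminf a - suminf b = (\<Sum>k. a k - b k)" by (rule suminf_diff[OF sa sb])
  also have "\<dots> \<le> (\<Sum>k. (1/2::real)^k * \<Delta>)"
    by (rule suminf_le) (use assms(3) summable_diff[OF sa sb] summable_mult2[OF summable_geometric, of "1/2" \<Delta>] in auto)
  also have "\<dots> = 2 * \<Delta>" by (simp add: suminf_mult2[symmetric] suminf_geometric)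
  finally show ?thesis by simp
qed

lemma suminf_less_geometric_bound:
  fixes a b :: "nat \<Rightarrow> real"
  assumes "\<And>k. \<bar>a k\<bar> \<le> (1/2)^k * R" "\<And>k. \<bar>b k\<bar> \<le> (1/2)^k * R"
    and "\<And>k. a k \<le> b k" "a m < b m"
  shows "suminf a < suminf b"
proof -
  have sa: "summable a" and sb: "summable b" using assms(1,2) by (auto intro: summable_geometric_bound)
  have "0 < (\<Sum>k. b k - a k)"
    using suminf_pos_iff[OF summable_diff[OF sb sa]] assms(3,4) by fastforce
  also have "\<dots> = suminf b - suminf a" by (rule suminf_diff[OF sb sa, symmetric])
  finally show ?thesis by simp
qed

text \<open>For a dense sequence of directions \<open>u\<close>, the weighted series of support functions is a
  continuous substitute for the volume of the hull that strictly decreases when the hull loses a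
  point.\<close>

definition support_weight :: "(nat \<Rightarrow> 'a::real_normed_vector) \<Rightarrow> nat \<Rightarrow> real" where
  "support_weight u k = (1/2)^k / (1 + norm (u k))"

definition support_series :: "(nat \<Rightarrow> 'a::euclidean_space) \<Rightarrow> (nat \<Rightarrow> 'a) \<Rightarrow> nat \<Rightarrow> real" where
  "support_series u s n = (\<Sum>k. support_weight u k * hull_support (u k) s n)"

lemma support_weight_pos: "0 < support_weight u k"
  unfolding support_weight_def by (simp add: add_pos_nonneg)

lemma support_weight_mult_norm_le:
  assumes "c \<ge> 0"
  shows "support_weight u k * (norm (u k) * c) \<le> (1/2)^k * c"
proof -
  have "support_weight u k * (norm (u k) * c) = (1/2)^k * c * (norm (u k) / (1 + norm (u k)))"
    by (simp add: support_weight_def)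
  also have "\<dots> \<le> (1/2)^k * c"
    using assms by (intro mult_left_le) (auto simp: add_pos_nonneg)
  finally show ?thesis .
qed

lemma support_series_term_bound:
  assumes "n > 0" "\<And>i. i < n \<Longrightarrow> norm (s i) \<le> R"
  shows "\<bar>support_weight u k * hull_support (u k) s n\<bar> \<le> (1/2)^k * R"
proof -
  have "R \<ge> 0" using assms(2)[OF assms(1)] norm_ge_zero[of "s 0"] by linarith
  have "\<bar>support_weight u k * hull_support (u k) s n\<bar> = support_weight u k * \<bar>hull_support (u k) s n\<bar>"
    using support_weight_pos[of u k] by (simp add: abs_mult)
  also have "\<dots> \<le> support_weight u k * (norm (u k) * R)"
    using abs_hull_support_le[OF assms] support_weight_pos[of u k] by (simp add: mult_left_mono)
  also have "\<dots> \<le> (1/2)^k * R" using \<open>R \<ge> 0\<close> by (rule support_weight_mult_norm_le)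
  finally show ?thesis .
qed

lemma support_series_perturb:
  assumes "n > 0" "\<And>i. i < n \<Longrightarrow> norm (s i) \<le> R" "\<And>i. i < n \<Longrightarrow> norm (l i) \<le> R"
  shows "support_series u l n \<le> support_series u s n + 2 * (\<Sum>i<n. norm (s i - l i))"
  unfolding support_series_def
proof (rule suminf_le_geometric_bound)
  show "\<bar>support_weight u k * hull_support (u k) l n\<bar> \<le> (1/2)^k * R"
    "\<bar>support_weight u k * hull_support (u k) s n\<bar> \<le> (1/2)^k * R" for k
    by (rule support_series_term_bound, fact assms(1), fact)+
  fix k
  define \<Delta> where "\<Delta> = (\<Sum>i<n. norm (s i - l i))"
  have "\<Delta> \<ge> 0" unfolding \<Delta>_def by (simp add: sum_nonneg)
  have "support_weight u k * (hull_support (u k) l n - hull_support (u k) s n)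
      \<le> support_weight u k * (norm (u k) * \<Delta>)"
    using hull_support_perturb[OF assms(1), of "u k" l s] support_weight_pos[of u k]
    by (intro mult_left_mono) (auto simp: \<Delta>_def)
  also have "\<dots> \<le> (1/2)^k * \<Delta>" using \<open>\<Delta> \<ge> 0\<close> by (rule support_weight_mult_norm_le)
  finally show "support_weight u k * hull_support (u k) l n
      - support_weight u k * hull_support (u k) s n \<le> (1/2)^k * \<Delta>"
    by (simp add: right_diff_distrib)
qed

lemma support_series_lower_bound:
  assumes "n > 0" "\<And>i. i < n \<Longrightarrow> norm (s i) \<le> R"
  shows "- (2 * R) \<le> support_series u s n"
proof -
  have "R \<ge> 0" using assms(2)[OF assms(1)] norm_ge_zero[of "s 0"] by linarith
  have "(\<Sum>k. 0::real) \<le> support_series u s n + 2 * R"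
    unfolding support_series_def
  proof (rule suminf_le_geometric_bound[where R = R])
    fix k
    show "\<bar>0::real\<bar> \<le> (1/2)^k * R" using \<open>R \<ge> 0\<close> by simp
    show bound: "\<bar>support_weight u k * hull_support (u k) s n\<bar> \<le> (1/2)^k * R"
      by (rule support_series_term_bound[OF assms])
    show "0 - support_weight u k * hull_support (u k) s n \<le> (1/2)^k * R"
      using bound by (simp add: abs_le_iff)
  qed
  then show ?thesis by simp
qed

lemma dense_direction_separates:
  assumes dense: "\<And>X. open X \<Longrightarrow> X \<noteq> {} \<Longrightarrow> \<exists>k. u k \<in> X"
    and n: "n > 0" "\<And>i. i < n \<Longrightarrow> norm (s i) \<le> R"
    and v: "v \<notin> convex hull (s ` {..<n})"
  obtains k where "hull_support (u k) s n < u k \<bullet> v"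
proof -
  have "R \<ge> 0" using n(2)[OF n(1)] norm_ge_zero[of "s 0"] by linarith
  obtain a b where ab: "a \<bullet> v < b" "\<And>x. x \<in> convex hull (s ` {..<n}) \<Longrightarrow> b < a \<bullet> x"
    using separating_hyperplane_closed_point[OF convex_convex_hull _ v]
    by (metis compact_imp_closed finite_imageI finite_imp_compact_convex_hull finite_lessThan)
  have "hull_support (- a) s n < (- a) \<bullet> v"
  proof -
    obtain i where i: "i < n" "hull_support (- a) s n = - a \<bullet> s i"
      by (rule hull_support_attained[OF n(1)])
    have "b < a \<bullet> s i" using i(1) by (intro ab(2) hull_inc) auto
    then show ?thesis using ab(1) i(2) by simp
  qed
  define g where "g = (- a) \<bullet> v - hull_support (- a) s n"
  define r where "r = g / (norm v + R + 1)"
  have "norm v + R + 1 > 0" using \<open>R \<ge> 0\<close> by (simp add: add_nonneg_pos)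
  then have "r > 0" "r * (norm v + R) < g"
    using \<open>hull_support (- a) s n < (- a) \<bullet> v\<close> by (simp_all add: r_def g_def field_simps)
  then obtain k where "u k \<in> ball (- a) r" using dense[of "ball (- a) r"] by auto
  define e where "e = norm (u k - (- a))"
  have "e < r" using \<open>u k \<in> ball (- a) r\<close> unfolding e_def mem_ball dist_norm by (metis norm_minus_commute)
  have "hull_support (u k) s n \<le> hull_support (- a) s n + e * R"
    unfolding e_def by (rule hull_support_perturb_direction[OF n])
  moreover have "(- a) \<bullet> v - e * norm v \<le> u k \<bullet> v"
  proof -
    have "norm (- a - u k) = e" unfolding e_def by (rule norm_minus_commute)
    then show ?thesis using norm_cauchy_schwarz[of "- a - u k" v] by (simp add: inner_diff_left)
  qed
  moreover have "e * (norm v + R) < g"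
    using \<open>e < r\<close> \<open>r * (norm v + R) < g\<close> \<open>R \<ge> 0\<close> mult_right_mono[of e r "norm v + R"] by simp
  ultimately show ?thesis using that[of k] by (simp add: g_def algebra_simps)
qed

lemma support_series_strict_mono:
  assumes dense: "\<And>X. open X \<Longrightarrow> X \<noteq> {} \<Longrightarrow> \<exists>k. u k \<in> X"
    and n: "n > 0" "\<And>i. i < n \<Longrightarrow> norm (s i) \<le> R" "\<And>i. i < n \<Longrightarrow> norm (s' i) \<le> R"
    and sub: "\<And>i. i < n \<Longrightarrow> s' i \<in> convex hull (s ` {..<n})"
    and v: "v \<in> convex hull (s ` {..<n})" "v \<notin> convex hull (s' ` {..<n})"
  shows "support_series u s' n < support_series u s n"
proof -
  obtain k where "hull_support (u k) s' n < u k \<bullet> v"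
    using dense_direction_separates[OF dense n(1,3) v(2)] by blast
  also have "u k \<bullet> v \<le> hull_support (u k) s n" using v(1) by (rule hull_support_convex_hull)
  finally have less: "hull_support (u k) s' n < hull_support (u k) s n" .
  show ?thesis
    unfolding support_series_def
  proof (rule suminf_less_geometric_bound[where m = k])
    show "\<bar>support_weight u j * hull_support (u j) s' n\<bar> \<le> (1/2)^j * R"
      "\<bar>support_weight u j * hull_support (u j) s n\<bar> \<le> (1/2)^j * R" for j
      by (rule support_series_term_bound, fact n(1), fact)+
    show "support_weight u j * hull_support (u j) s' n \<le> support_weight u j * hull_support (u j) s n" for j
      using hull_support_mono[OF n(1) sub] support_weight_pos[of u j] by (simp add: mult_left_mono)
    show "support_weight u k * hull_support (u k) s' n < support_weight u k * hull_support (u k) s n"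
      using less support_weight_pos[of u k] by simp
  qed
qed

section \<open>Minimising over tuples of points\<close>

lemma tuples_convergent_subseq:
  fixes s :: "nat \<Rightarrow> nat \<Rightarrow> 'a::metric_space"
  assumes "compact P" "\<And>k i. i < n \<Longrightarrow> s k i \<in> P"
  obtains l r where "strict_mono r" "\<And>i. i < n \<Longrightarrow> l i \<in> P" "\<And>i. i < n \<Longrightarrow> (\<lambda>k. s (r k) i) \<longlonglongrightarrow> l i"
proof -
  have "\<exists>l r. strict_mono r \<and> (\<forall>i<n. l i \<in> P \<and> (\<lambda>k. s (r k) i) \<longlonglongrightarrow> l i)"
    using assms(2)
  proof (induction n)
    case 0
    have "strict_mono (id :: nat \<Rightarrow> nat)" by (simp add: strict_mono_def)
    then show ?case by blast
  next
    case (Suc n)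
    then obtain l r where lr: "strict_mono r" "\<forall>i<n. l i \<in> P \<and> (\<lambda>k. s (r k) i) \<longlonglongrightarrow> l i"
      by (metis less_SucI)
    have "\<forall>k. s (r k) n \<in> P" using Suc.prems by simp
    then obtain l' r' where l': "l' \<in> P" "strict_mono r'" "((\<lambda>k. s (r k) n) \<circ> r') \<longlonglongrightarrow> l'"
      using compact_imp_seq_compact[OF assms(1)] seq_compactE by metis
    have "\<forall>i<Suc n. (l(n := l')) i \<in> P \<and> (\<lambda>k. s ((r \<circ> r') k) i) \<longlonglongrightarrow> (l(n := l')) i"
    proof (intro allI impI)
      fix i assume "i < Suc n"
      show "(l(n := l')) i \<in> P \<and> (\<lambda>k. s ((r \<circ> r') k) i) \<longlonglongrightarrow> (l(n := l')) i"
      proof (cases "i = n")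
        case True
        then show ?thesis using l' by (simp add: o_def)
      next
        case False
        then have "i < n" using \<open>i < Suc n\<close> by simp
        then have "((\<lambda>k. s (r k) i) \<circ> r') \<longlonglongrightarrow> l i"
          using lr(2) LIMSEQ_subseq_LIMSEQ[OF _ l'(2)] by blast
        then show ?thesis using False \<open>i < n\<close> lr(2) by (simp add: o_def)
      qed
    qed
    then show ?case using strict_mono_o[OF lr(1) l'(2)] by blast
  qed
  then show ?thesis using that by blast
qed

lemma tuples_attains_min:
  fixes F :: "(nat \<Rightarrow> 'a::real_normed_vector) \<Rightarrow> real"
  assumes P: "compact P" and A: "A \<noteq> {}" "\<And>s i. s \<in> A \<Longrightarrow> i < n \<Longrightarrow> s i \<in> P"
    and closed: "\<And>sq l. (\<And>k. sq k \<in> A) \<Longrightarrow> (\<And>i. i < n \<Longrightarrow> l i \<in> P) \<Longrightarrow>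
       (\<And>i. i < n \<Longrightarrow> (\<lambda>k. sq k i) \<longlonglongrightarrow> l i) \<Longrightarrow> l \<in> A"
    and below: "bdd_below (F ` A)"
    and lsc: "\<And>s l. s \<in> A \<Longrightarrow> l \<in> A \<Longrightarrow> F l \<le> F s + C * (\<Sum>i<n. norm (s i - l i))"
  obtains l where "l \<in> A" "\<And>s. s \<in> A \<Longrightarrow> F l \<le> F s"
proof -
  define m where "m = Inf (F ` A)"
  have "\<exists>s\<in>A. F s < m + inverse (real (Suc k))" for k
    using cInf_lessD[of "F ` A" "m + inverse (real (Suc k))"] A(1) by (auto simp: m_def)
  then obtain sq where sq: "\<And>k. sq k \<in> A" "\<And>k. F (sq k) < m + inverse (real (Suc k))" by metis
  obtain l r where lr: "strict_mono r" "\<And>i. i < n \<Longrightarrow> l i \<in> P"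
      "\<And>i. i < n \<Longrightarrow> (\<lambda>k. sq (r k) i) \<longlonglongrightarrow> l i"
    using tuples_convergent_subseq[OF P, of n sq] A(2) sq(1) by metis
  have "l \<in> A" by (rule closed[OF sq(1) lr(2,3)])
  define \<Delta> where "\<Delta> k = (\<Sum>i<n. norm (sq (r k) i - l i))" for k
  have "\<Delta> \<longlonglongrightarrow> (\<Sum>i<n. 0)"
    unfolding \<Delta>_def[abs_def] using lr(3) by (intro tendsto_sum tendsto_norm_zero LIM_zero) auto
  then have "(\<lambda>k. m + inverse (real (Suc k)) + C * \<Delta> k) \<longlonglongrightarrow> m + 0 + C * 0"
    by (intro tendsto_intros LIMSEQ_inverse_real_of_nat) simp
  moreover have "F l \<le> m + inverse (real (Suc k)) + C * \<Delta> k" for k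
  proof -
    have "F l \<le> F (sq (r k)) + C * \<Delta> k" unfolding \<Delta>_def by (rule lsc[OF sq(1) \<open>l \<in> A\<close>])
    also have "F (sq (r k)) < m + inverse (real (Suc (r k)))" by (rule sq(2))
    also have "inverse (real (Suc (r k))) \<le> inverse (real (Suc k))"
      using seq_suble[OF lr(1), of k] by (simp add: le_imp_inverse_le)
    finally show ?thesis by simp
  qed
  ultimately have "F l \<le> m" by (intro tendsto_lowerbound[OF _ _ trivial_limit_sequentially]) auto
  moreover have "m \<le> F s" if "s \<in> A" for s unfolding m_def using below that by (simp add: cInf_lower)
  ultimately show ?thesis using that \<open>l \<in> A\<close> by force
qed

lemma lattice_width_convex_hull_limit:
  fixes sq :: "nat \<Rightarrow> nat \<Rightarrow> 'a::euclidean_space"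
  assumes "is_lattice L" "n > 0" "\<And>k. w \<le> lattice_width L (convex hull (sq k ` {..<n}))"
    and "\<And>i. i < n \<Longrightarrow> (\<lambda>k. sq k i) \<longlonglongrightarrow> l i"
  shows "w \<le> lattice_width L (convex hull (l ` {..<n}))"
proof (rule lattice_width_greatest[OF dual_lattice_nontrivial[OF assms(1)]])
  fix y assume y: "y \<in> dual_lattice L" "y \<noteq> 0"
  have hull: "dir_width y (convex hull (s ` {..<n})) = dir_width y (s ` {..<n})" for s :: "nat \<Rightarrow> 'a"
    using assms(2) by (intro dir_width_convex_hull) auto
  define \<Delta> where "\<Delta> k = (\<Sum>i<n. norm (sq k i - l i))" for k
  have "\<Delta> \<longlonglongrightarrow> (\<Sum>i<n. 0)"
    unfolding \<Delta>_def[abs_def] using assms(4) by (intro tendsto_sum tendsto_norm_zero LIM_zero) auto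
  then have "(\<lambda>k. dir_width y (l ` {..<n}) + 2 * norm y * \<Delta> k) \<longlonglongrightarrow> dir_width y (l ` {..<n}) + 2 * norm y * 0"
    by (intro tendsto_intros) simp
  moreover have "w \<le> dir_width y (l ` {..<n}) + 2 * norm y * \<Delta> k" for k
  proof -
    have "w \<le> lattice_width L (convex hull (sq k ` {..<n}))" by (rule assms(3))
    also have "\<dots> \<le> dir_width y (convex hull (sq k ` {..<n}))"
      using assms(2) y by (intro lattice_width_le_dir_width) (auto simp: finite_imp_bounded_convex_hull)
    also have "\<dots> \<le> dir_width y (l ` {..<n}) + 2 * norm y * \<Delta> k"
      unfolding hull \<Delta>_def using assms(2) by (intro dir_width_perturb) auto
    finally show ?thesis .
  qed
  ultimately have "w \<le> dir_width y (l ` {..<n})" by (intro tendsto_lowerbound[OF _ _ trivial_limit_sequentially]) auto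
  then show "w \<le> dir_width y (convex hull (l ` {..<n}))" by (simp add: hull)
qed

section \<open>Moving a vertex\<close>

lemma convex_hull_insert_exists_ge:
  fixes z :: "'a::euclidean_space"
  assumes "p \<in> convex hull (insert v X)" "p \<noteq> v" "z \<bullet> v \<le> z \<bullet> p"
  shows "\<exists>x\<in>X. z \<bullet> p \<le> z \<bullet> x"
proof (rule ccontr)
  assume "\<not> ?thesis"
  then have lt: "\<And>x. x \<in> X \<Longrightarrow> z \<bullet> x < z \<bullet> p" by force
  have "X \<noteq> {}" using assms(1,2) by auto
  then obtain a b c where abc: "a \<ge> 0" "b \<ge> 0" "a + b = 1" "c \<in> convex hull X" "p = a *\<^sub>R v + b *\<^sub>R c"
    using assms(1) convex_hull_insert by blast
  have "convex hull X \<subseteq> {x. z \<bullet> x < z \<bullet> p}"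
    by (rule hull_minimal) (use lt convex_halfspace_lt in auto)
  then have "z \<bullet> c < z \<bullet> p" using abc(4) by auto
  moreover have "b \<noteq> 0" using abc assms(2) by auto
  ultimately have "b * (z \<bullet> c) < b * (z \<bullet> p)" using abc(2) by simp
  moreover have "a * (z \<bullet> v) \<le> a * (z \<bullet> p)" using assms(3) abc(1) by (rule mult_left_mono)
  ultimately have "z \<bullet> p < (a + b) * (z \<bullet> p)" using abc(5) by (simp add: algebra_simps)
  then show False using abc(3) by simp
qed

lemma dir_width_remove_vertex:
  fixes C :: "'a::euclidean_space set"
  assumes X: "finite X" and C: "compact C" "C \<noteq> {}" "C \<subseteq> convex hull (insert v X)" "v \<notin> C"
    and wide: "dir_width y (convex hull (insert v X)) \<le> dir_width y C"
  shows "dir_width y C \<le> dir_width y (convex hull X)"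
proof -
  define Q where "Q = convex hull (insert v X)"
  have "bounded Q" using X by (simp add: Q_def finite_imp_bounded_convex_hull)
  obtain p q where pq: "p \<in> C" "q \<in> C" "dir_width y C = y \<bullet> (p - q)"
    by (rule dir_width_attained[OF C(1,2)])
  have pqQ: "p \<in> Q" "q \<in> Q" using pq C(3) by (auto simp: Q_def)
  have vQ: "v \<in> Q" by (simp add: Q_def hull_inc)
  have "y \<bullet> (v - q) \<le> dir_width y Q" "y \<bullet> (p - v) \<le> dir_width y Q"
    using dir_width_upper[OF \<open>bounded Q\<close>] vQ pqQ by blast+
  then have "y \<bullet> (v - q) \<le> y \<bullet> (p - q)" "y \<bullet> (p - v) \<le> y \<bullet> (p - q)"
    using wide pq(3) unfolding Q_def by linarith+
  then have "y \<bullet> v \<le> y \<bullet> p" "(- y) \<bullet> v \<le> (- y) \<bullet> q" by (simp_all add: inner_diff_right)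
  moreover have "p \<noteq> v" "q \<noteq> v" using pq C(4) by auto
  ultimately obtain x x' where "x \<in> X" "y \<bullet> p \<le> y \<bullet> x" "x' \<in> X" "(- y) \<bullet> q \<le> (- y) \<bullet> x'"
    using convex_hull_insert_exists_ge[of p v X y] convex_hull_insert_exists_ge[of q v X "- y"] pqQ
    unfolding Q_def by blast
  then have "y \<bullet> (p - q) \<le> y \<bullet> (x - x')" by (simp add: inner_diff_right)
  also have "\<dots> \<le> dir_width y (convex hull X)"
    using \<open>x \<in> X\<close> \<open>x' \<in> X\<close> X by (intro dir_width_upper) (auto simp: finite_imp_bounded_convex_hull hull_inc)
  finally show ?thesis using pq(3) by simp
qed

lemma dir_width_shrink_vertex:
  fixes v c :: "'a::euclidean_space"
  assumes "finite X" "c \<in> X" "0 \<le> t" "t \<le> 1"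
  shows "(1 - t) * dir_width y (convex hull (insert v X))
    \<le> dir_width y (convex hull (insert ((1 - t) *\<^sub>R v + t *\<^sub>R c) X))"
proof -
  define v' where "v' = (1 - t) *\<^sub>R v + t *\<^sub>R c"
  define H where "H x = t *\<^sub>R c + (1 - t) *\<^sub>R x" for x :: 'a
  have "H x \<in> convex hull (insert v' X)" if "x \<in> insert v X" for x
  proof (cases "x = v")
    case True
    then show ?thesis by (simp add: H_def v'_def hull_inc add.commute)
  next
    case False
    then have "x \<in> convex hull (insert v' X)" "c \<in> convex hull (insert v' X)"
      using that assms(2) by (auto intro: hull_inc)
    then show ?thesis unfolding H_def using assms(3,4) by (intro convexD) auto
  qed
  then have "H ` (convex hull (insert v X)) \<subseteq> convex hull (insert v' X)"
    unfolding H_def convex_hull_affinity[symmetric] by (intro hull_minimal) auto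
  obtain p q where pq: "p \<in> convex hull (insert v X)" "q \<in> convex hull (insert v X)"
      "dir_width y (convex hull (insert v X)) = y \<bullet> (p - q)"
    using assms(1) by (metis dir_width_attained finite_imp_compact_convex_hull finite_insert
        convex_hull_eq_empty insert_not_empty)
  have "y \<bullet> (H p - H q) \<le> dir_width y (convex hull (insert v' X))"
    using \<open>H ` _ \<subseteq> _\<close> pq assms(1) by (intro dir_width_upper) (auto simp: finite_imp_bounded_convex_hull)
  moreover have "y \<bullet> (H p - H q) = (1 - t) * (y \<bullet> (p - q))" by (simp add: H_def algebra_simps)
  ultimately show ?thesis using pq(3) by (simp add: v'_def)
qed

lemma image_replace_value:
  assumes "v \<in> s ` I"
  shows "(\<lambda>i. if s i = v then v' else s i) ` I = insert v' (s ` I - {v})"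
  using assms by (auto simp: image_iff)

lemma extreme_point_outside_convex_subset:
  fixes Q C :: "'a::euclidean_space set"
  assumes "compact Q" "convex Q" "convex C" "C \<subset> Q"
  obtains v where "v extreme_point_of Q" "v \<notin> C"
proof -
  have "\<not> {v. v extreme_point_of Q} \<subseteq> C"
  proof
    assume "{v. v extreme_point_of Q} \<subseteq> C"
    then have "convex hull {v. v extreme_point_of Q} \<subseteq> C" using assms(3) by (rule hull_minimal)
    then show False using Krein_Milman_Minkowski[OF assms(1,2)] assms(4) by auto
  qed
  then show ?thesis using that by blast
qed

lemma extreme_point_not_in_moved_hull:
  fixes X :: "'a::euclidean_space set"
  assumes "v extreme_point_of convex hull X" "c \<in> X" "c \<noteq> v" "0 < t" "t \<le> 1"
  shows "v \<notin> convex hull (insert ((1 - t) *\<^sub>R v + t *\<^sub>R c) (X - {v}))"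
proof
  define v' where "v' = (1 - t) *\<^sub>R v + t *\<^sub>R c"
  assume "v \<in> convex hull (insert v' (X - {v}))"
  moreover have "v \<in> X" using assms(1) extreme_point_of_convex_hull by blast
  then have "v' \<in> convex hull X"
    unfolding v'_def using assms(2,4,5) by (intro convexD) (auto simp: hull_inc)
  then have "convex hull (insert v' (X - {v})) \<subseteq> convex hull X"
    by (intro hull_minimal) (auto simp: hull_inc)
  ultimately have "v extreme_point_of convex hull (insert v' (X - {v}))"
    using assms(1) by (auto simp: extreme_point_of_def)
  then have "v = v'" using extreme_point_of_convex_hull by fastforce
  then have "t *\<^sub>R (c - v) = 0" by (auto simp: v'_def algebra_simps)
  then show False using assms(3,4) by simp
qed

lemma dir_width_vertex_move:
  fixes C :: "'a::euclidean_space set"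
  assumes X0: "finite X0" "c \<in> X0" and t: "0 \<le> t" "t \<le> 1"
    and C: "compact C" "C \<noteq> {}" "C \<subseteq> convex hull (insert v X0)" "v \<notin> C" "w \<le> dir_width y C"
    and cases: "dir_width y (convex hull (insert v X0)) \<le> w \<or>
      w \<le> (1 - t) * dir_width y (convex hull (insert v X0))"
  shows "w \<le> dir_width y (convex hull (insert ((1 - t) *\<^sub>R v + t *\<^sub>R c) X0))"
  using cases
proof
  assume "dir_width y (convex hull (insert v X0)) \<le> w"
  then have "dir_width y C \<le> dir_width y (convex hull X0)"
    using C X0(1) by (intro dir_width_remove_vertex) auto
  also have "\<dots> \<le> dir_width y (convex hull (insert ((1 - t) *\<^sub>R v + t *\<^sub>R c) X0))"
    using X0 by (intro dir_width_mono hull_mono) (auto simp: finite_imp_bounded_convex_hull)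
  finally show ?thesis using C(5) by simp
next
  assume "w \<le> (1 - t) * dir_width y (convex hull (insert v X0))"
  also have "\<dots> \<le> dir_width y (convex hull (insert ((1 - t) *\<^sub>R v + t *\<^sub>R c) X0))"
    by (rule dir_width_shrink_vertex[OF X0 t])
  finally show ?thesis .
qed

lemma dir_width_shrink_factor:
  fixes Q :: "'a::euclidean_space set"
  assumes "is_lattice L" "bounded Q" "interior Q \<noteq> {}" "w \<ge> 0"
  obtains t where "0 < t" "t < 1"
    "\<And>y. y \<in> dual_lattice L \<Longrightarrow> y \<noteq> 0 \<Longrightarrow> dir_width y Q \<le> w \<or> w \<le> (1 - t) * dir_width y Q"
proof -
  obtain \<delta> where \<delta>: "\<delta> > 0"
    "\<And>y. y \<in> dual_lattice L \<Longrightarrow> y \<noteq> 0 \<Longrightarrow> dir_width y Q \<le> w + \<delta> \<Longrightarrow> dir_width y Q \<le> w"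
    using dir_width_gap[OF assms(1-3)] by blast
  define t where "t = \<delta> / (2 * (w + \<delta>))"
  have t: "0 < t" "t < 1" "(1 - t) * (w + \<delta>) = w + \<delta> / 2"
    using assms(4) \<delta>(1) by (auto simp: t_def field_simps)
  have "dir_width y Q \<le> w \<or> w \<le> (1 - t) * dir_width y Q" if y: "y \<in> dual_lattice L" "y \<noteq> 0" for y
  proof (cases "dir_width y Q \<le> w + \<delta>")
    case False
    then have "(1 - t) * (w + \<delta>) < (1 - t) * dir_width y Q"
      using t(2) by (intro mult_strict_left_mono) auto
    then show ?thesis using t(3) \<delta>(1) by simp
  qed (use \<delta>(2)[OF y] in simp)
  with t(1,2) that show ?thesis by blast
qed

lemma vertex_move_keeps_lattice_width:
  fixes X :: "'a::euclidean_space set"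
  assumes L: "is_lattice L" and X: "finite X"
    and C: "convex_body C" "C \<subset> convex hull X" "lattice_width L C = lattice_width L (convex hull X)"
  obtains v v' where "v \<in> X" "v' \<in> convex hull X" "v \<notin> convex hull (insert v' (X - {v}))"
    "lattice_width L (convex hull X) \<le> lattice_width L (convex hull (insert v' (X - {v})))"
proof -
  define Q where "Q = convex hull X"
  define w where "w = lattice_width L Q"
  have Q: "compact Q" "convex Q" "bounded Q"
    using X by (auto simp: Q_def finite_imp_compact_convex_hull compact_imp_bounded)
  have Cc: "compact C" "convex C" "C \<noteq> {}" "interior C \<noteq> {}"
    using C(1) interior_subset by (auto simp: convex_body_def)
  have "interior Q \<noteq> {}" using Cc(4) C(2) interior_mono unfolding Q_def by blast
  then have "w > 0" unfolding w_def by (rule lattice_width_pos[OF L Q(3)])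
  then obtain t where t: "0 < t" "t < 1"
    "\<And>y. y \<in> dual_lattice L \<Longrightarrow> y \<noteq> 0 \<Longrightarrow> dir_width y Q \<le> w \<or> w \<le> (1 - t) * dir_width y Q"
    using dir_width_shrink_factor[OF L Q(3) \<open>interior Q \<noteq> {}\<close>, of w] by auto
  obtain v where v: "v extreme_point_of Q" "v \<notin> C"
    using extreme_point_outside_convex_subset[OF Q(1,2) Cc(2)] C(2) Q_def by blast
  have "v \<in> X" using v(1) extreme_point_of_convex_hull unfolding Q_def by blast
  have "X - {v} \<noteq> {}"
  proof
    assume "X - {v} = {}"
    then have "X = {v}" using \<open>v \<in> X\<close> by auto
    then have "Q = {v}" by (simp add: Q_def)
    then show False using C(2) Cc(3) v(2) unfolding Q_def by auto
  qed
  then obtain c where c: "c \<in> X - {v}" by blast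
  define v' where "v' = (1 - t) *\<^sub>R v + t *\<^sub>R c"
  have "v' \<in> Q" unfolding v'_def Q_def using \<open>v \<in> X\<close> c t(1,2) by (intro convexD) (auto simp: hull_inc)
  have "w \<le> dir_width y (convex hull (insert v' (X - {v})))" if y: "y \<in> dual_lattice L" "y \<noteq> 0" for y
    unfolding v'_def
  proof (rule dir_width_vertex_move)
    show "finite (X - {v})" "c \<in> X - {v}" "0 \<le> t" "t \<le> 1" using X c t by auto
    show "compact C" "C \<noteq> {}" "v \<notin> C" by (fact Cc(1) Cc(3) v(2))+
    show "C \<subseteq> convex hull (insert v (X - {v}))" using C(2) \<open>v \<in> X\<close> by (auto simp: insert_absorb)
    show "w \<le> dir_width y C"
      using lattice_width_le_dir_width[OF y Cc(3) compact_imp_bounded[OF Cc(1)]] C(3) by (simp add: w_def Q_def)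
    show "dir_width y (convex hull (insert v (X - {v}))) \<le> w \<or>
        w \<le> (1 - t) * dir_width y (convex hull (insert v (X - {v})))"
      using t(3)[OF y] \<open>v \<in> X\<close> by (simp add: insert_absorb Q_def)
  qed
  then have "w \<le> lattice_width L (convex hull (insert v' (X - {v})))"
    by (intro lattice_width_greatest[OF dual_lattice_nontrivial[OF L]])
  moreover have "v \<notin> convex hull (insert v' (X - {v}))"
    unfolding v'_def using v(1) c t(1,2) by (intro extreme_point_not_in_moved_hull) (auto simp: Q_def)
  ultimately show ?thesis using that \<open>v \<in> X\<close> \<open>v' \<in> Q\<close> by (simp add: Q_def w_def)
qed

section \<open>Reduced subpolytopes\<close>

lemma dense_sequence_exists:
  obtains u :: "nat \<Rightarrow> 'a::euclidean_space" where "\<And>X. open X \<Longrightarrow> X \<noteq> {} \<Longrightarrow> \<exists>k. u k \<in> X"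
proof -
  obtain D :: "'a set" where D: "countable D" "\<And>X. open X \<Longrightarrow> X \<noteq> {} \<Longrightarrow> \<exists>d\<in>D. d \<in> X"
    using countable_dense_exists by blast
  show ?thesis
  proof (rule that)
    fix X :: "'a set" assume "open X" "X \<noteq> {}"
    then obtain d where "d \<in> D" "d \<in> X" using D(2) by blast
    then show "\<exists>k. from_nat_into D k \<in> X" using from_nat_into_surj[OF D(1)] by metis
  qed
qed

lemma card_vertices_convex_hull_le: "card (vertices (convex hull (l ` {..<n}))) \<le> n"
proof -
  have "vertices (convex hull (l ` {..<n})) \<subseteq> l ` {..<n}"
    unfolding vertices_def using extreme_point_of_convex_hull by blast
  then have "card (vertices (convex hull (l ` {..<n}))) \<le> card (l ` {..<n})" by (intro card_mono) auto
  also have "\<dots> \<le> n" using card_image_le[of "{..<n}" l] by simp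
  finally show ?thesis .
qed

lemma support_minimal_tuple_exists:
  fixes P :: "'a::euclidean_space set"
  assumes L: "is_lattice L" and P: "compact P" and n: "n > 0"
    and s0: "\<And>i. i < n \<Longrightarrow> s0 i \<in> P" "w \<le> lattice_width L (convex hull (s0 ` {..<n}))"
  obtains l where "\<And>i. i < n \<Longrightarrow> l i \<in> P" "w \<le> lattice_width L (convex hull (l ` {..<n}))"
    "\<And>s. (\<And>i. i < n \<Longrightarrow> s i \<in> P) \<Longrightarrow> w \<le> lattice_width L (convex hull (s ` {..<n})) \<Longrightarrow>
       support_series u l n \<le> support_series u s n"
proof -
  define A where "A = {s. (\<forall>i<n. s i \<in> P) \<and> w \<le> lattice_width L (convex hull (s ` {..<n}))}"
  obtain R where R: "\<And>x. x \<in> P \<Longrightarrow> norm x \<le> R" using compact_imp_bounded[OF P] bounded_iff by blast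
  obtain l where "l \<in> A" "\<And>s. s \<in> A \<Longrightarrow> support_series u l n \<le> support_series u s n"
  proof (rule tuples_attains_min[OF P, of A n "\<lambda>s. support_series u s n" 2])
    show "A \<noteq> {}" using s0 by (auto simp: A_def)
    show "s i \<in> P" if "s \<in> A" "i < n" for s i using that by (auto simp: A_def)
    show "l \<in> A" if "\<And>k. sq k \<in> A" "\<And>i. i < n \<Longrightarrow> l i \<in> P"
      "\<And>i. i < n \<Longrightarrow> (\<lambda>k. sq k i) \<longlonglongrightarrow> l i" for sq l
      using that lattice_width_convex_hull_limit[OF L n, of w sq l] by (auto simp: A_def)
    have "- (2 * R) \<le> support_series u s n" if "s \<in> A" for s
      using that R by (intro support_series_lower_bound[OF n]) (auto simp: A_def)
    then show "bdd_below ((\<lambda>s. support_series u s n) ` A)" by (rule bdd_belowI2)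
    show "support_series u l n \<le> support_series u s n + 2 * (\<Sum>i<n. norm (s i - l i))"
      if "s \<in> A" "l \<in> A" for s l
      using that R by (intro support_series_perturb[OF n]) (auto simp: A_def)
  qed blast
  then show ?thesis by (intro that[of l]) (auto simp: A_def)
qed

lemma lattice_reduced_if_support_minimal:
  fixes l :: "nat \<Rightarrow> 'a::euclidean_space"
  assumes L: "is_lattice L" and dense: "\<And>X. open X \<Longrightarrow> X \<noteq> {} \<Longrightarrow> \<exists>k. u k \<in> X"
    and n: "n > 0" and int: "interior (convex hull (l ` {..<n})) \<noteq> {}"
    and min: "\<And>s. (\<And>i. i < n \<Longrightarrow> s i \<in> convex hull (l ` {..<n})) \<Longrightarrow>
      lattice_width L (convex hull (l ` {..<n})) \<le> lattice_width L (convex hull (s ` {..<n})) \<Longrightarrow>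
      support_series u l n \<le> support_series u s n"
  shows "lattice_reduced L (convex hull (l ` {..<n}))"
proof -
  define X where "X = l ` {..<n}"
  have "finite X" by (simp add: X_def)
  have "\<not> (convex_body C \<and> C \<subset> convex hull X \<and> lattice_width L C = lattice_width L (convex hull X))" for C
  proof
    assume "convex_body C \<and> C \<subset> convex hull X \<and> lattice_width L C = lattice_width L (convex hull X)"
    then obtain v v' where v: "v \<in> X" "v' \<in> convex hull X" "v \<notin> convex hull (insert v' (X - {v}))"
      "lattice_width L (convex hull X) \<le> lattice_width L (convex hull (insert v' (X - {v})))"
      using vertex_move_keeps_lattice_width[OF L \<open>finite X\<close>] by metis
    define l' where "l' i = (if l i = v then v' else l i)" for i
    have img: "l' ` {..<n} = insert v' (X - {v})"
      unfolding l'_def X_def by (rule image_replace_value) (use v(1) X_def in simp)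
    have l'_hull: "l' i \<in> convex hull X" if "i < n" for i
      using v(2) that by (auto simp: l'_def X_def hull_inc)
    obtain R where R: "\<And>x. x \<in> convex hull X \<Longrightarrow> norm x \<le> R"
      using finite_imp_bounded_convex_hull[OF \<open>finite X\<close>] bounded_iff by blast
    have "support_series u l' n < support_series u l n"
    proof (rule support_series_strict_mono[OF dense n])
      show "norm (l i) \<le> R" "norm (l' i) \<le> R" if "i < n" for i
        using R l'_hull that by (auto simp: X_def hull_inc)
      show "l' i \<in> convex hull (l ` {..<n})" if "i < n" for i using l'_hull that by (simp add: X_def)
      show "v \<in> convex hull (l ` {..<n})" "v \<notin> convex hull (l' ` {..<n})"
        using v(1,3) img by (auto simp: X_def hull_inc)
    qed
    moreover have "support_series u l n \<le> support_series u l' n"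
      using min l'_hull v(4) img by (simp add: X_def)
    ultimately show False by simp
  qed
  moreover have "convex_body (convex hull X)"
    using int \<open>finite X\<close> by (simp add: X_def convex_body_def finite_imp_compact_convex_hull)
  ultimately show ?thesis by (simp add: lattice_reduced_def X_def)
qed

lemma full_polytope_vertices:
  assumes "full_polytope P"
  shows "finite (vertices P)" "P = convex hull (vertices P)"
proof -
  have "polytope P" using assms by (simp add: full_polytope_def)
  then show "finite (vertices P)"
    unfolding vertices_def by (intro finite_polyhedron_extreme_points polytope_imp_polyhedron)
  show "P = convex hull (vertices P)"
    unfolding vertices_def
    by (rule Krein_Milman_Minkowski) (use \<open>polytope P\<close> in \<open>auto intro: polytope_imp_compact polytope_imp_convex\<close>)
qed

lemma reduced_convex_hull_tuple_exists:
  fixes V :: "'a::euclidean_space set"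
  assumes L: "is_lattice L" and V: "finite V" "interior (convex hull V) \<noteq> {}"
  obtains l :: "nat \<Rightarrow> 'a" where "l ` {..<card V} \<subseteq> convex hull V"
    "lattice_width L (convex hull (l ` {..<card V})) = lattice_width L (convex hull V)"
    "lattice_reduced L (convex hull (l ` {..<card V}))"
proof -
  define n where "n = card V"
  define w where "w = lattice_width L (convex hull V)"
  have hull: "compact (convex hull V)" "bounded (convex hull V)"
    using V(1) by (auto simp: finite_imp_compact_convex_hull finite_imp_bounded_convex_hull)
  obtain s0 where s0: "s0 ` {..<n} = V"
    using ex_bij_betw_nat_finite[OF V(1)] by (metis atLeast0LessThan bij_betw_def n_def)
  have "n > 0" using V interior_subset by (fastforce simp: n_def card_gt_0_iff)
  obtain u :: "nat \<Rightarrow> 'a" where dense: "\<And>X. open X \<Longrightarrow> X \<noteq> {} \<Longrightarrow> \<exists>k. u k \<in> X"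
    using dense_sequence_exists by blast
  obtain l where l: "\<And>i. i < n \<Longrightarrow> l i \<in> convex hull V" "w \<le> lattice_width L (convex hull (l ` {..<n}))"
    "\<And>s. (\<And>i. i < n \<Longrightarrow> s i \<in> convex hull V) \<Longrightarrow> w \<le> lattice_width L (convex hull (s ` {..<n})) \<Longrightarrow>
       support_series u l n \<le> support_series u s n"
    using support_minimal_tuple_exists[OF L hull(1) \<open>n > 0\<close>, of s0 w u] s0
    by (metis hull_inc imageI lessThan_iff order_refl w_def)
  define Q where "Q = convex hull (l ` {..<n})"
  have "Q \<subseteq> convex hull V" unfolding Q_def using l(1) by (intro hull_minimal) auto
  have "lattice_width L Q = w"
    using l(2) lattice_width_mono[OF dual_lattice_nontrivial[OF L] \<open>Q \<subseteq> convex hull V\<close>] \<open>n > 0\<close> hull(2)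
    by (fastforce simp: Q_def w_def)
  moreover have "0 < w" unfolding w_def by (rule lattice_width_pos[OF L hull(2) V(2)])
  ultimately have "interior Q \<noteq> {}"
    using \<open>n > 0\<close> by (intro interior_nonempty_if_lattice_width_pos[OF L])
      (auto simp: Q_def finite_imp_bounded_convex_hull)
  then have "lattice_reduced L Q"
    unfolding Q_def using \<open>Q \<subseteq> convex hull V\<close> \<open>lattice_width L Q = w\<close>
    by (intro lattice_reduced_if_support_minimal[OF L dense \<open>n > 0\<close>] l(3)) (auto simp: Q_def)
  moreover have "l ` {..<n} \<subseteq> convex hull V" using l(1) by auto
  ultimately show ?thesis using that[of l] \<open>lattice_width L Q = w\<close> by (simp add: Q_def w_def n_def)
qed

theorem proposition3p22:
  fixes P L :: "'a::euclidean_space set"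
  assumes "full_polytope P" and "is_lattice L"
  shows "\<exists>Q. full_polytope Q \<and> Q \<subseteq> P \<and> lattice_reduced L Q \<and>
             lattice_width L Q = lattice_width L P \<and>
             card (vertices Q) \<le> card (vertices P)"
proof -
  note V = full_polytope_vertices[OF assms(1)]
  obtain l where l: "l ` {..<card (vertices P)} \<subseteq> P"
      "lattice_width L (convex hull (l ` {..<card (vertices P)})) = lattice_width L P"
      "lattice_reduced L (convex hull (l ` {..<card (vertices P)}))"
    using reduced_convex_hull_tuple_exists[OF assms(2) V(1)] assms(1) V(2)
    by (metis full_polytope_def)
  define Q where "Q = convex hull (l ` {..<card (vertices P)})"
  have "full_polytope Q"
    using l(3) by (simp add: Q_def full_polytope_def polytope_convex_hull lattice_reduced_def convex_body_def)
  moreover have "Q \<subseteq> P" unfolding Q_def using l(1) V(2) by (metis convex_convex_hull hull_minimal)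
  ultimately show ?thesis
    using l(2,3) card_vertices_convex_hull_le[of l "card (vertices P)"] by (auto simp: Q_def)
qed

end
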